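(* Let $N\ge 2$, $K\ge 2$ be integers, and let $R_{\mathrm{F}}(M)$, $r_{\mathrm{C}}(M,N,K)$, $r_{\mathrm{D}}(M,N,K)$ be as in the context. (1) If $N>K$ and $(N,K)\neq(3,2)$, then $\dfrac{R_{\mathrm{F}}(M)}{r_{\mathrm{C}}(M,N,K)}\le 2$ for all $1\le M\le N$. (2) If $N\le K$, then $\dfrac{R_{\mathrm{F}}(M)}{r_{\mathrm{D}}(M,N,K)}\le e$ for all $1\le M\le N$.
   Context: Binomial convention: $\binom{n}{m}=0$ if $m>n$. $R_{\mathrm{F}}(M)$, $M\in[0,N]$, is the lower convex envelope of the points $\{(0,N)\}\cup\{(M_t,R_t):t\in\{0,\ldots,K\}\}$ with $M_t=1+\frac{t(N-1)}{K}$ and $R_t=\frac{\binom{K}{t+1}-\binom{K-\min\{N-1,K\}}{t+1}}{\binom{K}{t}}$. For positive integers $N',K$, $r_{\mathrm{C}}(M,N',K)$, $M\in[0,N']$, is the lower convex envelope of the points $\left(\frac{tN'}{K},\ \frac{\binom{K}{t+1}-\binom{K-\min\{N',K\}}{t+1}}{\binom{K}{t}}\right)$, $t\in\{0,\ldots,K\}$; and $r_{\mathrm{D}}(M,N',K):=\frac{N'-M}{M}\left(1-\left(1-\frac{M}{N'}\right)^{\min\{N',K\}}\right)$ for $M\in(0,N']$. Ratios at points where the denominator vanishes (at $M=N$) are to be read as the corresponding inequality $R_{\mathrm{F}}(M)\le c\cdot(\text{denominator})$. *)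

theory Defs
  imports "HOL-Analysis.Analysis"
begin

definition lower_conv_env :: "(real \<times> real) set \<Rightarrow> real \<Rightarrow> real" where
  "lower_conv_env P x = Inf {y. (x, y) \<in> convex hull P}"

definition coef_R :: "nat \<Rightarrow> nat \<Rightarrow> nat \<Rightarrow> real" where
  "coef_R L K t = (real (K choose (t+1)) - real ((K - min L K) choose (t+1))) / real (K choose t)"

definition R_F :: "nat \<Rightarrow> nat \<Rightarrow> real \<Rightarrow> real" where
  "R_F N K M = lower_conv_env
     ({(0, real N)} \<union> {(1 + real t * (real N - 1) / real K, coef_R (N - 1) K t) | t. t \<in> {0..K}}) M"

definition r_C :: "real \<Rightarrow> nat \<Rightarrow> nat \<Rightarrow> real" where
  "r_C M N' K = lower_conv_env
     {(real t * real N' / real K, coef_R N' K t) | t. t \<in> {0..K}} M"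

definition r_D :: "real \<Rightarrow> nat \<Rightarrow> nat \<Rightarrow> real" where
  "r_D M N' K = (real N' - M) / M * (1 - (1 - M / real N') ^ (min N' K))"

end

theory Submission
  imports Defs
begin

text \<open>Upper bounds on \<open>R_F\<close> come from explicit points of the convex hull of its defining
  points, lower bounds on \<open>r_C\<close> from lines lying below all of its defining points.

  For \<open>N \<le> K\<close>, average the points \<open>t = 0, \<dots>, K\<close> with binomial weights of parameter
  \<open>q = (M - 1)/(N - 1)\<close>: the abscissa is \<open>M\<close>, and a hockey-stick identity turns the ordinate into
  \<open>\<Sum>i=1..N-1. r^i\<close> with \<open>r = 1 - q = x N/(N - 1)\<close>, \<open>x = 1 - M/N\<close>. Since
  \<open>(N/(N - 1))^(N-1) \<le> e\<close>, this is at most \<open>e \<Sum>i=1..N. x^i = e r_D\<close>.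

  For \<open>N > K\<close> all ordinates are \<open>f(t) = (K - t)/(t + 1)\<close>, a convex sequence. Thus \<open>R_F\<close> is at
  most the chord of \<open>f\<close> between the two vertices around \<open>v = (M - 1)K/(N - 1)\<close>, while \<open>r_C\<close> is
  at least the secant line of \<open>f\<close> through a segment at \<open>u = M K/N \<ge> v\<close>. Comparing the two
  is elementary, except when \<open>N = K + 1\<close> and \<open>M \<le> 2\<close>: there one uses the chord from
  \<open>(0, N)\<close> instead, and the comparison needs \<open>K \<ge> 3\<close>, whence the exclusion of
  \<open>(N, K) = (3, 2)\<close>.\<close>

section \<open>Lower convex envelopes\<close>

lemma convex_halfplane_above_line:
  "convex {p :: real \<times> real. \<alpha> + \<beta> * fst p \<le> snd p}"
proof -
  have "{p :: real \<times> real. \<alpha> + \<beta> * fst p \<le> snd p} = {p. (- \<beta>, 1) \<bullet> p \<ge> \<alpha>}"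
    by (auto simp: inner_prod_def algebra_simps)
  then show ?thesis by (simp add: convex_halfspace_ge)
qed

lemma convex_hull_above_line:
  fixes P :: "(real \<times> real) set"
  assumes "\<forall>p\<in>P. \<alpha> + \<beta> * fst p \<le> snd p" and "p \<in> convex hull P"
  shows "\<alpha> + \<beta> * fst p \<le> snd p"
proof -
  have "convex hull P \<subseteq> {p. \<alpha> + \<beta> * fst p \<le> snd p}"
    using assms(1) by (intro hull_minimal convex_halfplane_above_line) auto
  then show ?thesis using assms(2) by auto
qed

lemma lower_conv_env_le:
  assumes "(M, y) \<in> convex hull P" and "\<forall>p\<in>P. 0 \<le> snd p"
  shows "lower_conv_env P M \<le> y"
  unfolding lower_conv_env_def
proof (rule cInf_lower)
  show "y \<in> {y. (M, y) \<in> convex hull P}" using assms(1) by simp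
  show "bdd_below {y. (M, y) \<in> convex hull P}"
    using convex_hull_above_line[of P 0 0] assms(2) by (auto intro!: bdd_belowI[of _ 0])
qed

lemma lower_conv_env_ge_line:
  assumes "\<forall>p\<in>P. \<alpha> + \<beta> * fst p \<le> snd p" and "(M, y) \<in> convex hull P"
  shows "\<alpha> + \<beta> * M \<le> lower_conv_env P M"
  unfolding lower_conv_env_def
proof (rule cInf_greatest)
  show "{y. (M, y) \<in> convex hull P} \<noteq> {}" using assms(2) by auto
  show "\<alpha> + \<beta> * M \<le> y'" if "y' \<in> {y. (M, y) \<in> convex hull P}" for y'
    using convex_hull_above_line[OF assms(1), of "(M, y')"] that by simp
qed

lemma chord_point_in_convex_hull:
  fixes x1 y1 x2 y2 M :: real
  assumes "(x1, y1) \<in> P" "(x2, y2) \<in> P" and "x1 \<le> M" "M \<le> x2" "x1 < x2"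
  shows "(M, y1 + (y2 - y1) * (M - x1) / (x2 - x1)) \<in> convex hull P"
proof -
  define l where "l = (M - x1) / (x2 - x1)"
  have "0 \<le> l" "l \<le> 1" using assms(3-5) unfolding l_def by (auto simp: field_simps)
  then have "(1 - l) *\<^sub>R (x1, y1) + l *\<^sub>R (x2, y2) \<in> convex hull P"
    using assms(1,2) by (intro convexD[OF convex_convex_hull] hull_inc) auto
  moreover have "(1 - l) *\<^sub>R (x1, y1) + l *\<^sub>R (x2, y2) = (M, y1 + (y2 - y1) * l)"
  proof -
    have "(1 - l) * x1 + l * x2 = x1 + l * (x2 - x1)" by (simp add: algebra_simps)
    also have "\<dots> = M" using assms(5) unfolding l_def by simp
    finally show ?thesis by (simp add: algebra_simps)
  qed
  ultimately show ?thesis unfolding l_def by simp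
qed

lemma lower_conv_env_le_chord:
  fixes x1 y1 x2 y2 M :: real
  assumes "(x1, y1) \<in> P" "(x2, y2) \<in> P" and "x1 \<le> M" "M \<le> x2" "x1 < x2"
    and "\<forall>p\<in>P. 0 \<le> snd p"
  shows "lower_conv_env P M \<le> y1 + (y2 - y1) * (M - x1) / (x2 - x1)"
  using lower_conv_env_le[OF chord_point_in_convex_hull[OF assms(1-5)] assms(6)] .

section \<open>Binomial identities\<close>

lemma binomial_weighted_index_sum:
  fixes q r :: real
  assumes "q + r = 1"
  shows "(\<Sum>t\<le>K. real (K choose t) * q^t * r^(K - t) * real t) = real K * q"
proof (cases K)
  case 0
  then show ?thesis by simp
next
  case (Suc K')
  have "(\<Sum>t\<le>K. real (K choose t) * q^t * r^(K - t) * real t)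
      = (\<Sum>j\<le>K'. real (Suc K' choose Suc j) * real (Suc j) * q^Suc j * r^(K' - j))"
    unfolding Suc by (subst sum.atMost_Suc_shift) (simp add: mult_ac)
  also have "\<dots> = (\<Sum>j\<le>K'. real (Suc K') * q * (real (K' choose j) * q^j * r^(K' - j)))"
  proof (intro sum.cong refl)
    fix j
    have "real (Suc K' choose Suc j) * real (Suc j) = real (Suc K') * real (K' choose j)"
      by (metis Suc_times_binomial of_nat_mult mult.commute)
    then show "real (Suc K' choose Suc j) * real (Suc j) * q^Suc j * r^(K' - j)
        = real (Suc K') * q * (real (K' choose j) * q^j * r^(K' - j))"
      by (simp add: mult_ac)
  qed
  also have "\<dots> = real (Suc K') * q * (q + r)^K'"
    by (simp add: binomial_ring sum_distrib_left)
  finally show ?thesis using assms Suc by simp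
qed

lemma choose_Suc_telescope:
  assumes "L \<le> K"
  shows "K choose Suc t = ((K - L) choose Suc t) + (\<Sum>i=1..L. (K - i) choose t)"
  using assms
proof (induction L)
  case 0
  then show ?case by simp
next
  case (Suc L)
  then have "K - L = Suc (K - Suc L)" by simp
  then show ?case using Suc by simp
qed

lemma binomial_weighted_choose_sum:
  fixes q r :: real
  assumes "q + r = 1" and "i \<le> K"
  shows "(\<Sum>t\<le>K. q^t * r^(K - t) * real ((K - i) choose t)) = r^i"
proof -
  define m where "m = K - i"
  have K: "K = m + i" using assms(2) unfolding m_def by simp
  have "(\<Sum>t\<le>K. q^t * r^(K - t) * real ((K - i) choose t))
      = (\<Sum>t\<le>m. q^t * r^(K - t) * real (m choose t))"
    unfolding m_def[symmetric] by (rule sum.mono_neutral_right) (use K in auto)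
  also have "\<dots> = (\<Sum>t\<le>m. r^i * (real (m choose t) * q^t * r^(m - t)))"
  proof (rule sum.cong)
    fix t assume "t \<in> {..m}"
    then have "K - t = i + (m - t)" using K by auto
    then show "q^t * r^(K - t) * real (m choose t) = r^i * (real (m choose t) * q^t * r^(m - t))"
      by (simp add: power_add)
  qed simp
  also have "\<dots> = r^i * (q + r)^m" by (simp add: binomial_ring sum_distrib_left)
  finally show ?thesis using assms(1) by simp
qed

lemma coef_R_nonneg: "0 \<le> coef_R L K t"
  unfolding coef_R_def using binomial_right_mono[of "K - min L K" K "t + 1"]
  by (auto intro!: divide_nonneg_nonneg)

lemma binomial_average_coef_R:
  fixes q r :: real
  assumes "q + r = 1" and "L \<le> K"
  shows "(\<Sum>t\<le>K. real (K choose t) * q^t * r^(K - t) * coef_R L K t) = (\<Sum>i=1..L. r^i)"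
proof -
  have "(\<Sum>t\<le>K. real (K choose t) * q^t * r^(K - t) * coef_R L K t)
      = (\<Sum>t\<le>K. \<Sum>i=1..L. q^t * r^(K - t) * real ((K - i) choose t))"
  proof (intro sum.cong refl)
    fix t assume "t \<in> {..K}"
    then have "real (K choose t) \<noteq> 0" by simp
    then have coef: "real (K choose t) * coef_R L K t = (\<Sum>i=1..L. real ((K - i) choose t))"
      unfolding coef_R_def min_absorb1[OF assms(2)]
      using choose_Suc_telescope[OF assms(2), of t] by simp
    have "real (K choose t) * q^t * r^(K - t) * coef_R L K t
        = q^t * r^(K - t) * (real (K choose t) * coef_R L K t)"
      by (simp only: mult_ac)
    then show "real (K choose t) * q^t * r^(K - t) * coef_R L K t
        = (\<Sum>i=1..L. q^t * r^(K - t) * real ((K - i) choose t))"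
      unfolding coef by (simp add: sum_distrib_left)
  qed
  also have "\<dots> = (\<Sum>i=1..L. \<Sum>t\<le>K. q^t * r^(K - t) * real ((K - i) choose t))"
    by (rule sum.swap)
  also have "\<dots> = (\<Sum>i=1..L. r^i)"
    by (intro sum.cong refl binomial_weighted_choose_sum[OF assms(1)]) (use assms(2) in auto)
  finally show ?thesis .
qed

definition R_F_points :: "nat \<Rightarrow> nat \<Rightarrow> (real \<times> real) set" where
  "R_F_points N K = {(0, real N)} \<union>
     {(1 + real t * (real N - 1) / real K, coef_R (N - 1) K t) | t. t \<in> {0..K}}"

definition r_C_points :: "nat \<Rightarrow> nat \<Rightarrow> (real \<times> real) set" where
  "r_C_points N K = {(real t * real N / real K, coef_R N K t) | t. t \<in> {0..K}}"

lemma R_F_eq_lower_conv_env: "R_F N K M = lower_conv_env (R_F_points N K) M"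
  unfolding R_F_def R_F_points_def ..

lemma r_C_eq_lower_conv_env: "r_C M N K = lower_conv_env (r_C_points N K) M"
  unfolding r_C_def r_C_points_def ..

lemma R_F_points_nonneg: "\<forall>p\<in>R_F_points N K. 0 \<le> snd p"
  unfolding R_F_points_def using coef_R_nonneg by auto

lemma R_F_vertex_in_points:
  "t \<le> K \<Longrightarrow> (1 + real t * (real N - 1) / real K, coef_R (N - 1) K t) \<in> R_F_points N K"
  unfolding R_F_points_def by auto

section \<open>The bound against \<open>r_D\<close>\<close>

lemma R_F_le_geometric_sum:
  assumes "2 \<le> N" "N - 1 \<le> K" and "1 \<le> M" "M \<le> real N"
  shows "R_F N K M \<le> (\<Sum>i=1..N-1. (1 - (M - 1) / (real N - 1))^i)"
proof -
  have n1: "real N - 1 > 0" and k0: "real K > 0" using assms(1,2) by auto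
  define q where "q = (M - 1) / (real N - 1)"
  define r where "r = 1 - q"
  have qr: "q + r = 1" unfolding r_def by simp
  have "0 \<le> q" "q \<le> 1" using assms(3,4) n1 unfolding q_def by (auto simp: field_simps)
  then have "0 \<le> r" unfolding r_def by simp
  define w where "w t = real (K choose t) * q^t * r^(K - t)" for t
  define pt where "pt t = (1 + real t * (real N - 1) / real K, coef_R (N - 1) K t)" for t
  have w_sum: "(\<Sum>t\<le>K. w t) = 1" unfolding w_def using binomial_ring[of q r K] unfolding qr by simp
  have "(\<Sum>t\<le>K. w t *\<^sub>R pt t) \<in> convex hull R_F_points N K"
  proof (rule convex_sum)
    show "\<And>t. t \<in> {..K} \<Longrightarrow> 0 \<le> w t" unfolding w_def using \<open>0 \<le> q\<close> \<open>0 \<le> r\<close> by simp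
    show "\<And>t. t \<in> {..K} \<Longrightarrow> pt t \<in> convex hull R_F_points N K"
      unfolding pt_def by (intro hull_inc R_F_vertex_in_points) simp
  qed (use w_sum in auto)
  moreover have "fst (\<Sum>t\<le>K. w t *\<^sub>R pt t) = M"
  proof -
    have "fst (\<Sum>t\<le>K. w t *\<^sub>R pt t)
        = (\<Sum>t\<le>K. w t) + (real N - 1) / real K * (\<Sum>t\<le>K. w t * real t)"
      unfolding fst_sum pt_def
      by (simp add: algebra_simps sum.distrib sum_distrib_left sum_divide_distrib)
    also have "\<dots> = 1 + (real N - 1) / real K * (real K * q)"
      using binomial_weighted_index_sum[OF qr, of K] unfolding w_sum by (simp add: w_def)
    also have "\<dots> = M" using k0 n1 unfolding q_def by (simp add: field_simps)
    finally show ?thesis .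
  qed
  moreover have "snd (\<Sum>t\<le>K. w t *\<^sub>R pt t) = (\<Sum>i=1..N-1. r^i)"
    unfolding snd_sum pt_def w_def
    using binomial_average_coef_R[OF qr assms(2)] by (simp add: mult_ac)
  ultimately have "(M, \<Sum>i=1..N-1. r^i) \<in> convex hull R_F_points N K"
    by (metis prod.collapse)
  then show ?thesis
    unfolding R_F_eq_lower_conv_env r_def q_def using R_F_points_nonneg by (rule lower_conv_env_le)
qed

lemma r_D_eq_geometric_sum:
  assumes "N \<le> K" and "0 < M" "M \<le> real N"
  shows "r_D M N K = (\<Sum>i=1..N. (1 - M / real N)^i)"
proof -
  define x where "x = 1 - M / real N"
  have N0: "real N > 0" using assms by simp
  have "M / real N * (\<Sum>i=1..N. x^i) = x - x^Suc N"
    using sum_gp_multiplied[of 1 N x] N0 unfolding x_def by simp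
  then have sum_eq: "(\<Sum>i=1..N. x^i) = (x - x^Suc N) / (M / real N)"
    using assms(2) N0 by (simp add: field_simps)
  have "r_D M N K = (real N - M) / M * (1 - x^N)"
    unfolding r_D_def min_absorb1[OF assms(1)] x_def ..
  also have "(real N - M) / M = x / (M / real N)"
    unfolding x_def using N0 assms(2) by (simp add: field_simps)
  also have "x / (M / real N) * (1 - x^N) = (x - x^Suc N) / (M / real N)"
    by (simp add: algebra_simps)
  finally have "r_D M N K = (x - x^Suc N) / (M / real N)" .
  with sum_eq show ?thesis unfolding x_def by simp
qed

lemma geometric_sum_le_exp_geometric_sum:
  assumes "2 \<le> N" and "M \<le> real N"
  shows "(\<Sum>i=1..N-1. (1 - (M - 1) / (real N - 1))^i) \<le> exp 1 * (\<Sum>i=1..N. (1 - M / real N)^i)"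
proof -
  define x where "x = 1 - M / real N"
  define c where "c = real N / (real N - 1)"
  have n1: "real N - 1 > 0" using assms(1) by simp
  have "0 \<le> x" using assms unfolding x_def by (simp add: field_simps)
  have "1 \<le> c" unfolding c_def using n1 by (simp add: field_simps)
  have "c^(N - 1) = (1 + 1 / real (N - 1))^(N - 1)"
    unfolding c_def using n1 assms(1) by (simp add: of_nat_diff field_simps)
  also have "\<dots> \<le> exp 1" using assms(1) by (intro exp_ge_one_plus_x_over_n_power_n) auto
  finally have c_exp: "c^(N - 1) \<le> exp 1" .
  have "(\<Sum>i=1..N-1. (1 - (M - 1) / (real N - 1))^i) = (\<Sum>i=1..N-1. c^i * x^i)"
    unfolding x_def c_def using n1 by (intro sum.cong refl) (simp add: power_mult_distrib[symmetric] field_simps)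
  also have "\<dots> \<le> (\<Sum>i=1..N-1. exp 1 * x^i)"
  proof (rule sum_mono)
    fix i assume "i \<in> {1..N-1}"
    then have "c^i \<le> exp 1" using c_exp \<open>1 \<le> c\<close> power_increasing[of i "N - 1" c] by simp
    then show "c^i * x^i \<le> exp 1 * x^i" using \<open>0 \<le> x\<close> by (simp add: mult_right_mono)
  qed
  also have "\<dots> \<le> (\<Sum>i=1..N. exp 1 * x^i)"
    by (rule sum_mono2) (use \<open>0 \<le> x\<close> in auto)
  finally show ?thesis unfolding x_def by (simp add: sum_distrib_left)
qed

lemma R_F_le_exp_r_D:
  assumes "2 \<le> N" "N \<le> K" and "1 \<le> M" "M \<le> real N"
  shows "R_F N K M \<le> exp 1 * r_D M N K"
proof -
  have "R_F N K M \<le> (\<Sum>i=1..N-1. (1 - (M - 1) / (real N - 1))^i)"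
    by (rule R_F_le_geometric_sum) (use assms in auto)
  also have "\<dots> \<le> exp 1 * (\<Sum>i=1..N. (1 - M / real N)^i)"
    by (rule geometric_sum_le_exp_geometric_sum) (use assms in auto)
  also have "\<dots> = exp 1 * r_D M N K"
    using r_D_eq_geometric_sum[OF assms(2) _ assms(4)] assms(3) by simp
  finally show ?thesis .
qed

section \<open>The bound against \<open>r_C\<close>\<close>

definition mn_rate :: "real \<Rightarrow> real \<Rightarrow> real" where
  "mn_rate k t = (k - t) / (t + 1)"

lemma coef_R_eq_mn_rate:
  assumes "K \<le> L" "t \<le> K"
  shows "coef_R L K t = mn_rate (real K) (real t)"
proof -
  have "Suc t * (K choose Suc t) = (K - t) * (K choose t)"
    using binomial_absorption[of t K] binomial_absorb_comp[of K t] by simp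
  then have "real (K choose (t + 1)) * (real t + 1) = (real K - real t) * real (K choose t)"
    using assms(2) by (metis Suc_eq_plus1 add.commute mult.commute of_nat_Suc of_nat_diff of_nat_mult)
  moreover have "real (K choose t) > 0" using assms(2) by simp
  ultimately show ?thesis
    unfolding coef_R_def mn_rate_def using assms(1) by (simp add: min_absorb2 field_simps)
qed

lemma mn_rate_diff:
  assumes "0 \<le> t"
  shows "mn_rate k t - mn_rate k (t + 1) = (k + 1) / ((t + 1) * (t + 2))"
  using assms unfolding mn_rate_def by (simp add: field_simps)

lemma mn_rate_above_secant:
  fixes s t :: nat
  assumes "0 \<le> k"
  shows "mn_rate k s + (mn_rate k (real s + 1) - mn_rate k s) * (real t - real s) \<le> mn_rate k t"
proof -
  have "real t + 1 \<noteq> 0" "real s + 1 \<noteq> 0" "real s + 2 \<noteq> 0" by linarith+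
  then have "mn_rate k t - (mn_rate k s + (mn_rate k (real s + 1) - mn_rate k s) * (real t - real s))
      = (k + 1) * ((real t - real s) * (real t - real s - 1)) / ((real t + 1) * (real s + 1) * (real s + 2))"
    unfolding mn_rate_def by (simp add: divide_simps) (simp add: algebra_simps)
  moreover have "0 \<le> (real t - real s) * (real t - real s - 1)"
    by (cases "t \<le> s") (auto intro: mult_nonpos_nonpos)
  then have "0 \<le> (k + 1) * ((real t - real s) * (real t - real s - 1))
      / ((real t + 1) * (real s + 1) * (real s + 2))"
    using assms by simp
  ultimately show ?thesis by linarith
qed

lemma R_F_le_secant:
  assumes "K \<le> N - 1" "t + 1 \<le> K"
    and "real t \<le> (M - 1) * real K / (real N - 1)" "(M - 1) * real K / (real N - 1) \<le> real t + 1"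
  shows "R_F N K M \<le> mn_rate K t + (mn_rate K (real t + 1) - mn_rate K t)
    * ((M - 1) * real K / (real N - 1) - real t)"
proof -
  have k0: "real K > 0" and n1: "real N - 1 > 0" using assms(1,2) by auto
  define x where "x t = 1 + real t * (real N - 1) / real K" for t
  have vertex: "(x t, mn_rate K t) \<in> R_F_points N K" if "t \<le> K" for t
    using R_F_vertex_in_points[OF that, of N] coef_R_eq_mn_rate[of K "N - 1" t] that assms(1)
    unfolding x_def by simp
  have dx: "x (t + 1) - x t = (real N - 1) / real K" unfolding x_def using k0 by (simp add: field_simps)
  have "x t \<le> M" "M \<le> x (t + 1)"
    using assms(3,4) k0 n1 unfolding x_def by (simp_all add: field_simps)
  moreover have "x t < x (t + 1)" using dx k0 n1 by (simp add: algebra_simps)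
  ultimately have "R_F N K M \<le> mn_rate K t + (mn_rate K (real t + 1) - mn_rate K t)
      * (M - x t) / (x (t + 1) - x t)"
    unfolding R_F_eq_lower_conv_env using vertex[of t] vertex[of "t + 1", unfolded of_nat_add of_nat_1] assms(2)
    by (intro lower_conv_env_le_chord R_F_points_nonneg) auto
  moreover have "(M - x t) / (x (t + 1) - x t) = (M - 1) * real K / (real N - 1) - real t"
    unfolding dx unfolding x_def using k0 n1 by (simp add: field_simps)
  ultimately show ?thesis by (metis times_divide_eq_right)
qed

lemma R_F_le_chord_from_origin:
  assumes "N = K + 1" "1 \<le> K" and "0 \<le> M" "M \<le> 2"
  shows "R_F N K M \<le> real N + ((real K - 1) / 2 - real N) * M / 2"
proof -
  have coef: "coef_R (N - 1) K 1 = (real K - 1) / 2"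
    using coef_R_eq_mn_rate[of K "N - 1" 1] assms(1,2) by (simp add: mn_rate_def)
  have "(2, coef_R (N - 1) K 1) \<in> R_F_points N K"
    using R_F_vertex_in_points[of 1 K N] assms(1,2) by simp
  then have "(2, (real K - 1) / 2) \<in> R_F_points N K" unfolding coef .
  moreover have "(0, real N) \<in> R_F_points N K" unfolding R_F_points_def by simp
  ultimately have "R_F N K M \<le> real N + ((real K - 1) / 2 - real N) * (M - 0) / (2 - 0)"
    unfolding R_F_eq_lower_conv_env using assms(3,4) R_F_points_nonneg
    by (intro lower_conv_env_le_chord) auto
  then show ?thesis by simp
qed

lemma r_C_ge_secant:
  assumes "K \<le> N" "s + 1 \<le> K" and "0 \<le> M" "M \<le> real N"
  shows "mn_rate K s + (mn_rate K (real s + 1) - mn_rate K s) * (M * real K / real N - real s)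
    \<le> r_C M N K"
proof -
  have k0: "real K > 0" and n0: "real N > 0" using assms(1,2) by auto
  define a where "a = mn_rate K s"
  define b where "b = mn_rate K (real s + 1) - mn_rate K s"
  have below: "\<forall>p\<in>r_C_points N K. (a - b * real s) + (b * real K / real N) * fst p \<le> snd p"
  proof
    fix p assume "p \<in> r_C_points N K"
    then obtain t where t: "t \<le> K" "p = (real t * real N / real K, coef_R N K t)"
      unfolding r_C_points_def by auto
    have "a + b * (real t - real s) \<le> mn_rate K t"
      unfolding a_def b_def using mn_rate_above_secant[of K s t] by simp
    then show "(a - b * real s) + (b * real K / real N) * fst p \<le> snd p"
      using t coef_R_eq_mn_rate[OF assms(1) t(1)] k0 n0 by (simp add: algebra_simps)
  qed
  have "(0, coef_R N K 0) \<in> r_C_points N K" "(real N, coef_R N K K) \<in> r_C_points N K"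
    unfolding r_C_points_def using k0 by force+
  then obtain y where "(M, y) \<in> convex hull r_C_points N K"
    using chord_point_in_convex_hull assms(3,4) n0 by fastforce
  from lower_conv_env_ge_line[OF below this]
  have "(a - b * real s) + (b * real K / real N) * M \<le> r_C M N K"
    unfolding r_C_eq_lower_conv_env .
  moreover have "(a - b * real s) + (b * real K / real N) * M = a + b * (M * real K / real N - real s)"
    by (simp add: algebra_simps)
  ultimately show ?thesis unfolding a_def b_def by simp
qed

lemma linear_le_of_endpoints:
  fixes a b w W F :: real
  assumes "a \<le> F" "a + b * W \<le> F" and "0 \<le> w" "w \<le> W"
  shows "a + b * w \<le> F"
proof (cases "0 \<le> b")
  case True
  then have "b * w \<le> b * W" using assms by (intro mult_left_mono) auto
  then show ?thesis using assms by simp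
next
  case False
  then have "b * w \<le> 0" using assms by (simp add: mult_nonpos_nonneg)
  then show ?thesis using assms by simp
qed


lemma add_one_le_mult_diff_one:
  fixes k n T :: real
  assumes "0 \<le> T" "1 \<le> k" "k + 1 \<le> n" and "1 \<le> T \<or> k + 2 \<le> n"
  shows "k + 1 \<le> (T + 1) * (n - 1)"
  using assms(4)
proof
  assume "1 \<le> T"
  then have "2 * (n - 1) \<le> (T + 1) * (n - 1)" using assms(2,3) by (intro mult_right_mono) auto
  then show ?thesis using assms(2,3) by (simp add: algebra_simps)
next
  assume "k + 2 \<le> n"
  moreover have "1 * (n - 1) \<le> (T + 1) * (n - 1)" using assms(1-3) by (intro mult_right_mono) auto
  ultimately show ?thesis by (simp add: algebra_simps)
qed

lemma chord_le_two_secant_same_segment: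
  fixes k n T v u :: real
  assumes "0 \<le> T" "T + 1 \<le> k" and "u = v + (k - v) / n" "u \<le> T + 1"
    and "k + 1 \<le> n" "2 \<le> k" and "1 \<le> T \<or> k + 2 \<le> n"
  shows "mn_rate k T + (mn_rate k (T + 1) - mn_rate k T) * (v - T)
    \<le> 2 * (mn_rate k T + (mn_rate k (T + 1) - mn_rate k T) * (u - T))"
proof -
  define d where "d = mn_rate k T - mn_rate k (T + 1)"
  have d_eq: "d = (k + 1) / ((T + 1) * (T + 2))"
    unfolding d_def using mn_rate_diff[OF assms(1)] .
  have n1: "n - 1 > 0" and T1: "T + 1 > 0" "T + 2 > 0" using assms(1,5,6) by auto
  have "v = (n * u - k) / (n - 1)" using assms(3) n1 by (simp add: field_simps)
  then have "2 * u - v - T = ((n - 2) * u + k) / (n - 1) - T" using n1 by (simp add: field_simps)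
  also have "\<dots> \<le> ((n - 2) * (T + 1) + k) / (n - 1) - T"
    using assms(4-6) n1 by (intro diff_right_mono divide_right_mono add_right_mono mult_left_mono) auto
  also have "\<dots> = (n + k - T - 2) / (n - 1)" using n1 by (simp add: field_simps)
  finally have slack: "2 * u - v - T \<le> (n + k - T - 2) / (n - 1)" .
  have "(k - T) * ((T + 2) * (n - 1)) - (k + 1) * (n + k - T - 2)
      = (k - 1 - T) * ((T + 1) * (n - 1) - (k + 1))"
    by (simp add: algebra_simps)
  moreover have "0 \<le> (k - 1 - T) * ((T + 1) * (n - 1) - (k + 1))"
    using assms(2) add_one_le_mult_diff_one[OF assms(1) _ assms(5,7)] assms(6) by simp
  ultimately have factor: "(k + 1) * (n + k - T - 2) \<le> (k - T) * ((T + 2) * (n - 1))" by linarith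
  have "d * (2 * u - v - T) \<le> d * ((n + k - T - 2) / (n - 1))"
    using slack assms(1,6) by (intro mult_left_mono) (auto simp: d_eq)
  also have "\<dots> = (k + 1) * (n + k - T - 2) / ((T + 1) * ((T + 2) * (n - 1)))"
    unfolding d_eq by (simp add: ac_simps)
  also have "\<dots> \<le> (k - T) * ((T + 2) * (n - 1)) / ((T + 1) * ((T + 2) * (n - 1)))"
    using factor T1 n1 by (intro divide_right_mono) auto
  also have "\<dots> = mn_rate k T"
    unfolding mn_rate_def using T1 n1 by (intro nonzero_mult_divide_mult_cancel_right) simp
  finally show ?thesis unfolding d_def by (simp add: algebra_simps)
qed

lemma chord_le_two_secant_next_segment:
  fixes k n T v u :: real
  assumes "0 \<le> T" "T + 2 \<le> k" and "v \<le> T + 1" and "u = v + (k - v) / n" "T + 1 \<le> u"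
    and "k + 1 \<le> n" "2 \<le> k" and "1 \<le> T \<or> k + 2 \<le> n"
  shows "mn_rate k T + (mn_rate k (T + 1) - mn_rate k T) * (v - T)
    \<le> 2 * (mn_rate k (T + 1) + (mn_rate k (T + 2) - mn_rate k (T + 1)) * (u - (T + 1)))"
proof -
  define c where "c = k - T - 1"
  define w where "w = u - (T + 1)"
  define d0 where "d0 = (k + 1) / ((T + 1) * (T + 2))"
  define d1 where "d1 = (k + 1) / ((T + 2) * (T + 3))"
  have f0: "mn_rate k T = mn_rate k (T + 1) + d0"
    using mn_rate_diff[OF assms(1), of k] unfolding d0_def by simp
  have f2: "mn_rate k (T + 2) = mn_rate k (T + 1) - d1"
    using mn_rate_diff[of "T + 1" k] assms(1) unfolding d1_def by (simp add: add.assoc)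
  have f1: "mn_rate k (T + 1) = c / (T + 2)" unfolding mn_rate_def c_def by (simp add: add.assoc)
  have n1: "n - 1 > 0" "n > 0" and c0: "0 < c" using assms(2,6,7) unfolding c_def by auto
  have nu: "n * u = v * (n - 1) + k" using assms(4) n1 by (simp add: field_simps)
  have "(T + 1 - v) * (n - 1) = c - n * w" unfolding c_def w_def using nu by (simp add: algebra_simps)
  then have v_eq: "T + 1 - v = (c - n * w) / (n - 1)" using n1 by (simp add: field_simps)
  have "0 \<le> w" using assms(5) unfolding w_def by simp
  have "v * (n - 1) \<le> (T + 1) * (n - 1)" using assms(3) n1 by (intro mult_right_mono) auto
  then have "n * w \<le> c" unfolding w_def c_def using nu by (simp add: algebra_simps)
  then have "w \<le> c / n" using n1 by (simp add: field_simps)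
  have "d0 * c / (n - 1) + (2 * d1 - d0 * n / (n - 1)) * w \<le> c / (T + 2)"
  proof (rule linear_le_of_endpoints[OF _ _ \<open>0 \<le> w\<close> \<open>w \<le> c / n\<close>])
    have "(k + 1) / ((T + 1) * (n - 1)) \<le> 1"
      using add_one_le_mult_diff_one[OF assms(1) _ assms(6,8)] assms(1,7) n1 by simp
    then have "c / (T + 2) * ((k + 1) / ((T + 1) * (n - 1))) \<le> c / (T + 2)"
      using c0 assms(1) by (intro mult_left_le) auto
    then show "d0 * c / (n - 1) \<le> c / (T + 2)" unfolding d0_def by (simp add: field_simps)
    have "3 * n \<le> (T + 3) * n" using assms(1) n1 by (intro mult_right_mono) auto
    then have "2 * (k + 1) \<le> (T + 3) * n" using assms(6,7) by (simp add: algebra_simps)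
    then have "2 * (k + 1) / ((T + 3) * n) \<le> 1" using assms(1) n1 by simp
    then have "c / (T + 2) * (2 * (k + 1) / ((T + 3) * n)) \<le> c / (T + 2)"
      using c0 assms(1) by (intro mult_left_le) auto
    moreover have "d0 * c / (n - 1) + (2 * d1 - d0 * n / (n - 1)) * (c / n)
        = c / (T + 2) * (2 * (k + 1) / ((T + 3) * n))"
      unfolding d0_def d1_def using n1 assms(1) by (simp add: field_simps)
    ultimately show "d0 * c / (n - 1) + (2 * d1 - d0 * n / (n - 1)) * (c / n) \<le> c / (T + 2)"
      by simp
  qed
  moreover have "d0 * (T + 1 - v) = d0 * c / (n - 1) - d0 * n / (n - 1) * w"
    unfolding v_eq by (simp add: diff_divide_distrib right_diff_distrib)
  ultimately have "d0 * (T + 1 - v) + 2 * d1 * w \<le> mn_rate k (T + 1)"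
    unfolding f1 by (simp add: algebra_simps)
  then show ?thesis unfolding f0 f2 w_def by (simp add: algebra_simps)
qed

lemma origin_chord_le_two_secant_first_segment:
  fixes k n M :: real
  assumes "3 \<le> k" "n = k + 1" and "M * k / n \<le> 1"
  shows "n + ((k - 1) / 2 - n) * M / 2
    \<le> 2 * (mn_rate k 0 + (mn_rate k 1 - mn_rate k 0) * (M * k / n - 0))"
proof -
  have "M * k \<le> k + 1" using assms by (simp add: divide_le_eq)
  moreover have "k * (3 * M - 4) = 3 * (M * k) - 4 * k" by (simp add: algebra_simps)
  ultimately have "k * (3 * M - 4) \<le> 0" using assms(1) by linarith
  then have "3 * M - 4 \<le> 0" using assms(1) by (simp add: mult_le_0_iff)
  then have key: "(k - 1) * (3 * M - 4) \<le> 0" using assms(1) by (simp add: mult_nonneg_nonpos)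
  have R: "2 * (mn_rate k 0 + (mn_rate k 1 - mn_rate k 0) * (M * k / n - 0)) = 2 * k - M * k"
    unfolding mn_rate_def assms(2) using assms(1) by (simp add: field_simps)
  show ?thesis unfolding R using key assms(2) by (simp add: field_simps)
qed

lemma origin_chord_le_two_secant_second_segment:
  fixes k n M :: real
  assumes "3 \<le> k" "n = k + 1" and "M \<le> 2" "1 \<le> M * k / n"
  shows "n + ((k - 1) / 2 - n) * M / 2
    \<le> 2 * (mn_rate k 1 + (mn_rate k 2 - mn_rate k 1) * (M * k / n - 1))"
proof -
  have "k + 1 \<le> M * k" using assms by (simp add: le_divide_eq)
  then have "2 * ((k - 1) * (k - 3)) \<le> k * (6 * M + 2 * k - 14)" by (simp add: algebra_simps)
  moreover have "0 \<le> (k - 1) * (k - 3)" using assms(1) by simp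
  ultimately have "0 \<le> k * (6 * M + 2 * k - 14)" by linarith
  then have "0 \<le> 6 * M + 2 * k - 14" using assms(1) by (simp add: zero_le_mult_iff)
  moreover have "0 \<le> (2 - M) * (k - 3)" using assms(1,3) by simp
  ultimately have key: "20 - 4 * k \<le> 9 * M - M * k" by (simp add: algebra_simps)
  have R: "2 * (mn_rate k 1 + (mn_rate k 2 - mn_rate k 1) * (M * k / n - 1))
      = k - 1 - (M * k - k - 1) / 3"
    unfolding mn_rate_def assms(2) using assms(1) by (simp add: field_simps)
  show ?thesis unfolding R using key assms(2) by (simp add: field_simps)
qed

lemma R_F_le_two_r_C_on_segment:
  assumes "2 \<le> K" "K < N" and "1 \<le> t \<or> K + 2 \<le> N" and "t + 1 \<le> K"
    and "1 \<le> M" "M \<le> real N"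
    and "real t \<le> (M - 1) * real K / (real N - 1)" "(M - 1) * real K / (real N - 1) \<le> real t + 1"
  shows "R_F N K M \<le> 2 * r_C M N K"
proof -
  define f where "f = mn_rate (real K)"
  define v where "v = (M - 1) * real K / (real N - 1)"
  define u where "u = M * real K / real N"
  have n1: "real N - 1 > 0" using assms(1,2) by simp
  have vn: "v * (real N - 1) = (M - 1) * real K" unfolding v_def using n1 by simp
  have uv: "u = v + (real K - v) / real N"
  proof -
    have "v + (real K - v) / real N = (v * (real N - 1) + real K) / real N"
      using n1 by (simp add: field_simps)
    then show ?thesis unfolding vn u_def by (simp add: algebra_simps)
  qed
  have "M * real K \<le> real N * real K" using assms(6) by (intro mult_right_mono) auto
  then have u_le: "u \<le> real K" unfolding u_def using n1 by (simp add: divide_le_eq mult.commute)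
  have tv: "real t \<le> v" "v \<le> real t + 1" using assms(7,8) unfolding v_def .
  have alt: "1 \<le> real t \<or> real K + 2 \<le> real N" using assms(3) by auto
  have nk: "real K + 1 \<le> real N" "2 \<le> real K" using assms(1,2) by simp_all
  have RF: "R_F N K M \<le> f t + (f (real t + 1) - f t) * (v - real t)"
    unfolding f_def v_def using R_F_le_secant[of K N t M] assms(2,4,7,8) by simp
  show ?thesis
  proof (cases "u \<le> real t + 1")
    case True
    have "f t + (f (real t + 1) - f t) * (v - real t) \<le> 2 * (f t + (f (real t + 1) - f t) * (u - real t))"
      unfolding f_def using assms(4)
      by (intro chord_le_two_secant_same_segment[OF _ _ uv True nk alt]) simp_all
    also have "\<dots> \<le> 2 * r_C M N K"
      using r_C_ge_secant[of K N t M] assms(2,4,5,6) unfolding f_def u_def by simp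
    finally show ?thesis using RF by simp
  next
    case False
    then have "t + 2 \<le> K" using u_le assms(4) by linarith
    have "f t + (f (real t + 1) - f t) * (v - real t)
        \<le> 2 * (f (real t + 1) + (f (real t + 2) - f (real t + 1)) * (u - (real t + 1)))"
      unfolding f_def using \<open>t + 2 \<le> K\<close> False
      by (intro chord_le_two_secant_next_segment[OF _ _ tv(2) uv _ nk alt]) (simp_all add: add.assoc)
    also have "\<dots> \<le> 2 * r_C M N K"
      using r_C_ge_secant[of K N "t + 1" M] \<open>t + 2 \<le> K\<close> assms(2,5,6)
      unfolding f_def u_def by (simp add: ac_simps)
    finally show ?thesis using RF by simp
  qed
qed

lemma R_F_le_two_r_C_near_origin:
  assumes "N = K + 1" "3 \<le> K" and "1 \<le> M" "M \<le> 2"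
  shows "R_F N K M \<le> 2 * r_C M N K"
proof -
  define f where "f = mn_rate (real K)"
  have k3: "3 \<le> real K" and n: "real N = real K + 1" using assms(1,2) by simp_all
  have RF: "R_F N K M \<le> real N + ((real K - 1) / 2 - real N) * M / 2"
    by (rule R_F_le_chord_from_origin) (use assms in auto)
  have M_le: "M \<le> real N" using assms(1,2,4) by simp
  show ?thesis
  proof (cases "M * real K / real N \<le> 1")
    case True
    have "real N + ((real K - 1) / 2 - real N) * M / 2
        \<le> 2 * (f 0 + (f 1 - f 0) * (M * real K / real N - 0))"
      unfolding f_def by (rule origin_chord_le_two_secant_first_segment[OF k3 n True])
    also have "\<dots> \<le> 2 * r_C M N K"
      using r_C_ge_secant[of K N 0 M] assms M_le unfolding f_def by simp
    finally show ?thesis using RF by simp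
  next
    case False
    have "real N + ((real K - 1) / 2 - real N) * M / 2
        \<le> 2 * (f 1 + (f 2 - f 1) * (M * real K / real N - 1))"
      unfolding f_def using False
      by (intro origin_chord_le_two_secant_second_segment[OF k3 n assms(4)]) simp
    also have "\<dots> \<le> 2 * r_C M N K"
      using r_C_ge_secant[of K N 1 M] assms M_le unfolding f_def by (simp add: one_add_one)
    finally show ?thesis using RF by simp
  qed
qed

lemma obtain_unit_interval_index:
  fixes v :: real
  assumes "1 \<le> K" and "0 \<le> v" "v \<le> real K"
  obtains t :: nat where "t + 1 \<le> K" "real t \<le> v" "v \<le> real t + 1"
proof (cases "real K - 1 \<le> v")
  case True
  show ?thesis by (rule that[of "K - 1"]) (use True assms in auto)
next
  case False
  have floor: "real (nat \<lfloor>v\<rfloor>) = of_int \<lfloor>v\<rfloor>" using assms(2) by simp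
  show ?thesis
  proof (rule that[of "nat \<lfloor>v\<rfloor>"])
    show "nat \<lfloor>v\<rfloor> + 1 \<le> K" using False floor of_int_floor_le[of v] by linarith
  qed (use floor in linarith)+
qed

lemma R_F_le_two_r_C:
  assumes "2 \<le> K" "K < N" "(N, K) \<noteq> (3, 2)" and "1 \<le> M" "M \<le> real N"
  shows "R_F N K M \<le> 2 * r_C M N K"
proof -
  define v where "v = (M - 1) * real K / (real N - 1)"
  have n1: "real N - 1 > 0" using assms(1,2) by simp
  have "0 \<le> v" unfolding v_def using assms(4) n1 by simp
  moreover have "(M - 1) * real K \<le> (real N - 1) * real K"
    using assms(5) by (intro mult_right_mono) auto
  then have "v \<le> real K" unfolding v_def using n1 by (simp add: divide_le_eq mult.commute)
  ultimately obtain t where t: "t + 1 \<le> K" "real t \<le> v" "v \<le> real t + 1"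
    using assms(1) obtain_unit_interval_index[of K v] by auto
  show ?thesis
  proof (cases "N = K + 1 \<and> t = 0")
    case True
    then have "v = M - 1" unfolding v_def using assms(1) by simp
    then show ?thesis
      using True t assms by (intro R_F_le_two_r_C_near_origin[of N K]) auto
  next
    case False
    then have "1 \<le> t \<or> K + 2 \<le> N" using assms(2) by auto
    then show ?thesis using t assms unfolding v_def by (intro R_F_le_two_r_C_on_segment) auto
  qed
qed

theorem lemma5:
  fixes N K :: nat
  assumes "N \<ge> 2" and "K \<ge> 2"
  shows "(N > K \<and> (N, K) \<noteq> (3, 2) \<longrightarrow>
            (\<forall>M::real. 1 \<le> M \<and> M \<le> real N \<longrightarrow> R_F N K M \<le> 2 * r_C M N K))
       \<and> (N \<le> K \<longrightarrow>
            (\<forall>M::real. 1 \<le> M \<and> M \<le> real N \<longrightarrow> R_F N K M \<le> exp 1 * r_D M N K))"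
  using R_F_le_two_r_C[OF assms(2)] R_F_le_exp_r_D[OF assms(1)] by blast

end
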